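(* Let $\mathcal{C}$ be the class of distributions supported on $[0,1]$ that can be written as a mixture $wF_1+(1-w)F_2$ of two regular distributions $F_1,F_2$ ($w\in[0,1]$). Any algorithm in the pricing query model that, for every $F\in\mathcal{C}$, outputs an estimate of the CDF of $F$ within Lévy distance $\epsilon$ (with constant success probability) requires $\Omega(\epsilon^{-3})$ pricing queries.
   Context: A distribution with CDF $F$ is regular if $R(q)=qF^{-1}(1-q)$ is concave on $[0,1]$. Pricing query model: in each round $t$ the algorithm (adaptively) chooses a price $p_t$, a fresh sample $v_t\sim F$ is drawn independently, and the algorithm observes only $\mathrm{sign}(v_t-p_t)\in\{-1,+1\}$. Lévy distance: $\mathrm{L\acute{e}vy}(F,G)=\inf\{\epsilon: F(v-\epsilon)-\epsilon\le G(v)\le F(v+\epsilon)+\epsilon\ \forall v\}$. *)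

theory Defs
  imports "HOL-Probability.Probability"
begin

definition quantile :: "(real \<Rightarrow> real) \<Rightarrow> real \<Rightarrow> real" where
  "quantile F p = Inf {v. p \<le> F v}"

definition revenue_curve :: "(real \<Rightarrow> real) \<Rightarrow> real \<Rightarrow> real" where
  "revenue_curve F q = q * quantile F (1 - q)"

definition regular :: "real measure \<Rightarrow> bool" where
  "regular D \<longleftrightarrow> real_distribution D \<and> concave_on {0<..<1} (revenue_curve (cdf D))"

definition mix2_regular_class :: "real measure \<Rightarrow> bool" where
  "mix2_regular_class D \<longleftrightarrow> real_distribution D \<and> measure D {0..1} = 1 \<and>
     (\<exists>w D1 D2. 0 \<le> w \<and> w \<le> 1 \<and> regular D1 \<and> regular D2 \<and>
        (\<forall>x. cdf D x = w * cdf D1 x + (1 - w) * cdf D2 x))"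

text \<open>Levy distance (extended-real valued; infimum of the empty set is infinity).\<close>
definition levy_dist :: "(real \<Rightarrow> real) \<Rightarrow> (real \<Rightarrow> real) \<Rightarrow> ereal" where
  "levy_dist F G = Inf {ereal e | e. \<forall>v. F (v - e) - e \<le> G v \<and> G v \<le> F (v + e) + e}"

text \<open>Probability of observing answer b at price p: True means v >= p (sign +1).\<close>
definition resp_prob :: "real measure \<Rightarrow> real \<Rightarrow> bool \<Rightarrow> real" where
  "resp_prob D p b = (if b then measure D {p..} else measure D {..<p})"

text \<open>Success probability of a deterministic adaptive algorithm with n pricing queries:
  price h is the next price given the history h of answers, est h the output CDF estimate.\<close>
definition det_success :: "real measure \<Rightarrow> nat \<Rightarrow> real \<Rightarrow> (bool list \<Rightarrow> real)
    \<Rightarrow> (bool list \<Rightarrow> real \<Rightarrow> real) \<Rightarrow> real" where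
  "det_success D n \<epsilon> price est =
     (\<Sum>h\<in>{h. length h = n}. (\<Prod>t<n. resp_prob D (price (take t h)) (h ! t)) *
        (if levy_dist (cdf D) (est h) \<le> ereal \<epsilon> then 1 else 0))"

text \<open>Randomized algorithm: internal random seed \<omega> drawn from probability space M.\<close>
definition success_prob :: "real measure \<Rightarrow> real measure \<Rightarrow> nat \<Rightarrow> real
    \<Rightarrow> (real \<Rightarrow> bool list \<Rightarrow> real) \<Rightarrow> (real \<Rightarrow> bool list \<Rightarrow> real \<Rightarrow> real) \<Rightarrow> real" where
  "success_prob M D n \<epsilon> price est = (\<integral>\<omega>. det_success D n \<epsilon> (price \<omega>) (est \<omega>) \<partial>M)"

end

theory Submission
  imports Defs
begin

text \<open>Compare the uniform distribution on [0, 1] with k \<approx> 1/(10\<epsilon>) alternatives; the j-th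
  moves the mass of the j-th of k disjoint intervals of width 5\<epsilon> to an atom at its left end.
  Every alternative is a mixture of two regular distributions, and no estimate is within Levy
  distance \<epsilon> of both the uniform CDF and an alternative. A query at price p separates the
  uniform distribution from at most one alternative, and then only with KL divergence
  O(\<epsilon>^2). By the chain rule for KL divergence and a Pinsker-type inequality, succeeding with
  probability 2/3 on all k + 1 instances with n queries forces k = O(n \<epsilon>^2), that is
  n = \<Omega>(\<epsilon>^-3).\<close>

section \<open>Transcripts of adaptive pricing algorithms\<close>

text \<open>A response model r p b is the probability of answer b to a query at price p,
  as resp_prob D is for a valuation distribution D.\<close>

definition response_model :: "(real \<Rightarrow> bool \<Rightarrow> real) \<Rightarrow> bool" where
  "response_model r \<longleftrightarrow> (\<forall>p b. 0 \<le> r p b) \<and> (\<forall>p. r p True + r p False = 1)"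

abbreviation histories :: "nat \<Rightarrow> bool list set" where
  "histories n \<equiv> {h. length h = n}"

definition transcript_prob ::
    "(real \<Rightarrow> bool \<Rightarrow> real) \<Rightarrow> (bool list \<Rightarrow> real) \<Rightarrow> nat \<Rightarrow> bool list \<Rightarrow> real" where
  "transcript_prob r price n h = (\<Prod>t<n. r (price (take t h)) (h ! t))"

lemma finite_histories: "finite (histories n)"
  using finite_lists_length_eq[of "UNIV :: bool set" n] by simp

lemma sum_histories_Suc:
  "sum f (histories (Suc n)) = (\<Sum>h\<in>histories n. f (True # h)) + (\<Sum>h\<in>histories n. f (False # h))"
proof -
  have split: "histories (Suc n) = (\<lambda>h. True # h) ` histories n \<union> (\<lambda>h. False # h) ` histories n"
    by (auto simp: length_Suc_conv)
  have "sum f (histories (Suc n))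
      = sum f ((\<lambda>h. True # h) ` histories n) + sum f ((\<lambda>h. False # h) ` histories n)"
    unfolding split by (rule sum.union_disjoint) (auto simp: finite_histories)
  then show ?thesis
    by (simp add: sum.reindex)
qed

lemma transcript_prob_0 [simp]: "transcript_prob r price 0 h = 1"
  by (simp add: transcript_prob_def)

lemma transcript_prob_Cons:
  "transcript_prob r price (Suc n) (b # h) = r (price []) b * transcript_prob r (\<lambda>g. price (b # g)) n h"
  unfolding transcript_prob_def prod.lessThan_Suc_shift by simp

lemma transcript_prob_nonneg: "response_model r \<Longrightarrow> 0 \<le> transcript_prob r price n h"
  unfolding transcript_prob_def response_model_def by (simp add: prod_nonneg)

lemma sum_transcript_prob:
  assumes "response_model r"
  shows "(\<Sum>h\<in>histories n. transcript_prob r price n h) = 1"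
proof (induction n arbitrary: price)
  case 0
  then show ?case by simp
next
  case (Suc n)
  then show ?case
    using assms unfolding response_model_def
    by (simp add: sum_histories_Suc transcript_prob_Cons flip: sum_distrib_left)
qed

lemma transcript_prob_pos_transfer:
  assumes "response_model r0" "\<And>p b. 0 < r0 p b \<Longrightarrow> 0 < r1 p b"
    and "0 < transcript_prob r0 price n h"
  shows "0 < transcript_prob r1 price n h"
proof -
  have "r0 (price (take t h)) (h ! t) \<noteq> 0" if "t < n" for t
    using assms(3) that unfolding transcript_prob_def
    by (metis finite_lessThan lessThan_iff less_irrefl prod_zero_iff)
  then have "0 < r1 (price (take t h)) (h ! t)" if "t < n" for t
    using assms(1,2) that unfolding response_model_def by (metis order_le_less)
  then show ?thesis
    unfolding transcript_prob_def by (intro prod_pos) auto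
qed

section \<open>Kullback--Leibler divergence of transcripts\<close>

definition binary_kl :: "(real \<Rightarrow> bool \<Rightarrow> real) \<Rightarrow> (real \<Rightarrow> bool \<Rightarrow> real) \<Rightarrow> real \<Rightarrow> real" where
  "binary_kl r0 r1 p =
     r0 p True * ln (r0 p True / r1 p True) + r0 p False * ln (r0 p False / r1 p False)"

definition transcript_kl ::
    "(real \<Rightarrow> bool \<Rightarrow> real) \<Rightarrow> (real \<Rightarrow> bool \<Rightarrow> real) \<Rightarrow> (bool list \<Rightarrow> real) \<Rightarrow> nat \<Rightarrow> real" where
  "transcript_kl r0 r1 price n =
     (\<Sum>h\<in>histories n. transcript_prob r0 price n h *
        ln (transcript_prob r0 price n h / transcript_prob r1 price n h))"

definition query_cost :: "(real \<Rightarrow> real) \<Rightarrow> (bool list \<Rightarrow> real) \<Rightarrow> nat \<Rightarrow> bool list \<Rightarrow> real" where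
  "query_cost c price n h = (\<Sum>t<n. c (price (take t h)))"

lemma query_cost_Cons:
  "query_cost c price (Suc n) (b # h) = c (price []) + query_cost c (\<lambda>g. price (b # g)) n h"
  unfolding query_cost_def sum.lessThan_Suc_shift by simp

lemma mult_ln_div_mult:
  fixes x y x' y' :: real
  assumes "0 \<le> x" "0 \<le> y" "0 < x \<Longrightarrow> 0 < x'" "0 < y \<Longrightarrow> 0 < y'"
  shows "x * y * ln (x * y / (x' * y')) = x * y * ln (x / x') + x * (y * ln (y / y'))"
proof (cases "x = 0 \<or> y = 0")
  case False
  then have "0 < x" "0 < y" "0 < x'" "0 < y'"
    using assms by auto
  then show ?thesis
    by (simp add: ln_div ln_mult algebra_simps)
qed auto

text \<open>Chain rule: the divergence of the transcripts is the expected sum of the divergences of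
  the individual answers, so it is bounded by the expected cost of the queries.\<close>

lemma transcript_kl_le_expected_cost:
  assumes r0: "response_model r0"
    and abs_cont: "\<And>p b. 0 < r0 p b \<Longrightarrow> 0 < r1 p b"
    and cost: "\<And>p. binary_kl r0 r1 p \<le> c p"
  shows "transcript_kl r0 r1 price n
    \<le> (\<Sum>h\<in>histories n. transcript_prob r0 price n h * query_cost c price n h)"
proof (induction n arbitrary: price)
  case 0
  then show ?case by (simp add: transcript_kl_def query_cost_def)
next
  case (Suc n)
  define p where "p = price []"
  define pT where "pT = (\<lambda>g. price (True # g))"
  define pF where "pF = (\<lambda>g. price (False # g))"
  have nonneg: "0 \<le> r0 q b" for q b
    using r0 by (simp add: response_model_def)
  have sums: "sum (transcript_prob r0 pT n) (histories n) = 1"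
    "sum (transcript_prob r0 pF n) (histories n) = 1" "r0 p True + r0 p False = 1"
    using sum_transcript_prob[OF r0] r0 by (auto simp: response_model_def)
  have split: "transcript_prob r0 price (Suc n) (b # h) *
        ln (transcript_prob r0 price (Suc n) (b # h) / transcript_prob r1 price (Suc n) (b # h))
     = r0 p b * transcript_prob r0 (\<lambda>g. price (b # g)) n h * ln (r0 p b / r1 p b)
       + r0 p b * (transcript_prob r0 (\<lambda>g. price (b # g)) n h *
           ln (transcript_prob r0 (\<lambda>g. price (b # g)) n h / transcript_prob r1 (\<lambda>g. price (b # g)) n h))"
    for b h
    unfolding transcript_prob_Cons p_def
    by (rule mult_ln_div_mult)
      (auto intro: nonneg transcript_prob_nonneg[OF r0] abs_cont
         transcript_prob_pos_transfer[OF r0 abs_cont] simp: p_def)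
  have "transcript_kl r0 r1 price (Suc n)
      = binary_kl r0 r1 p + r0 p True * transcript_kl r0 r1 pT n + r0 p False * transcript_kl r0 r1 pF n"
    unfolding transcript_kl_def sum_histories_Suc split sum.distrib
    unfolding sum_distrib_left[symmetric] sum_distrib_right[symmetric]
    unfolding pT_def[symmetric] pF_def[symmetric] sums binary_kl_def
    by (simp add: algebra_simps)
  also have "\<dots> \<le> c p
      + r0 p True * (\<Sum>h\<in>histories n. transcript_prob r0 pT n h * query_cost c pT n h)
      + r0 p False * (\<Sum>h\<in>histories n. transcript_prob r0 pF n h * query_cost c pF n h)"
    using cost[of p] Suc.IH[of pT] Suc.IH[of pF] nonneg by (meson add_mono mult_left_mono)
  also have "\<dots> = (\<Sum>h\<in>histories (Suc n). transcript_prob r0 price (Suc n) h * query_cost c price (Suc n) h)"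
    unfolding sum_histories_Suc transcript_prob_Cons query_cost_Cons
    unfolding p_def[symmetric] pT_def[symmetric] pF_def[symmetric]
    by (simp add: algebra_simps sum.distrib sums flip: sum_distrib_left sum_distrib_right)
      (metis sums(3) distrib_left mult.right_neutral add.commute)
  finally show ?case .
qed


lemma mult_ln_div_ge_hellinger:
  fixes x y :: real
  assumes "0 \<le> x" "0 \<le> y" "0 < x \<Longrightarrow> 0 < y"
  shows "(sqrt x - sqrt y)^2 + x - y \<le> x * ln (x / y)"
proof (cases "x = 0")
  case True
  then show ?thesis using assms by (simp add: power2_eq_square)
next
  case False
  then have x: "0 < x" and y: "0 < y" using assms by auto
  have "ln (sqrt y / sqrt x) \<le> sqrt y / sqrt x - 1"
    using x y by (intro ln_le_minus_one) auto
  moreover have "ln (x / y) = - 2 * ln (sqrt y / sqrt x)"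
    using x y by (simp add: ln_div ln_sqrt)
  ultimately have "x * (-2) * (sqrt y / sqrt x - 1) \<le> x * ln (x / y)"
    using x by (simp add: mult_left_mono)
  also have "x * (-2) * (sqrt y / sqrt x - 1) = (sqrt x - sqrt y)^2 + x - y"
    using x y by (simp add: field_simps power2_eq_square)
  finally show ?thesis .
qed

text \<open>A Pinsker-type inequality, obtained through the Hellinger distance and Cauchy--Schwarz.\<close>

lemma transcript_tv_le_sqrt_kl:
  assumes r0: "response_model r0" and r1: "response_model r1"
    and abs_cont: "\<And>p b. 0 < r0 p b \<Longrightarrow> 0 < r1 p b"
  shows "(\<Sum>h\<in>histories n. \<bar>transcript_prob r0 price n h - transcript_prob r1 price n h\<bar>)
    \<le> 2 * sqrt (transcript_kl r0 r1 price n)"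
proof -
  let ?P = "transcript_prob r0 price n" and ?Q = "transcript_prob r1 price n"
  let ?K = "transcript_kl r0 r1 price n"
  have P0: "0 \<le> ?P h" and Q0: "0 \<le> ?Q h" for h
    using transcript_prob_nonneg r0 r1 by auto
  have sP: "sum ?P (histories n) = 1" and sQ: "sum ?Q (histories n) = 1"
    using sum_transcript_prob r0 r1 by auto
  have "(\<Sum>h\<in>histories n. (sqrt (?P h) - sqrt (?Q h))^2 + ?P h - ?Q h) \<le> ?K"
    unfolding transcript_kl_def
    by (intro sum_mono mult_ln_div_ge_hellinger P0 Q0 transcript_prob_pos_transfer[OF r0 abs_cont])
  then have hellinger: "(\<Sum>h\<in>histories n. (sqrt (?P h) - sqrt (?Q h))^2) \<le> ?K"
    by (simp add: sum.distrib sum_subtractf sP sQ)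
  then have K0: "0 \<le> ?K"
    by (meson order_trans sum_nonneg zero_le_power2)
  have factor: "\<bar>?P h - ?Q h\<bar> = \<bar>sqrt (?P h) - sqrt (?Q h)\<bar> * (sqrt (?P h) + sqrt (?Q h))" for h
  proof -
    have "?P h - ?Q h = (sqrt (?P h) - sqrt (?Q h)) * (sqrt (?P h) + sqrt (?Q h))"
      using P0[of h] Q0[of h] by (simp add: algebra_simps)
    moreover have "0 \<le> sqrt (?P h) + sqrt (?Q h)"
      using P0[of h] Q0[of h] by simp
    ultimately show ?thesis
      by (metis abs_mult abs_of_nonneg)
  qed
  have "(sqrt (?P h) + sqrt (?Q h))^2 \<le> 2 * (?P h + ?Q h)" for h
    using P0[of h] Q0[of h] zero_le_power2[of "sqrt (?P h) - sqrt (?Q h)"]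
    by (simp add: power2_eq_square algebra_simps)
  then have "(\<Sum>h\<in>histories n. (sqrt (?P h) + sqrt (?Q h))^2) \<le> (\<Sum>h\<in>histories n. 2 * (?P h + ?Q h))"
    by (rule sum_mono)
  also have "\<dots> = 4"
    by (simp add: sum.distrib sP sQ flip: sum_distrib_left)
  finally have sum_plus: "(\<Sum>h\<in>histories n. (sqrt (?P h) + sqrt (?Q h))^2) \<le> 4" .
  have "(\<Sum>h\<in>histories n. \<bar>?P h - ?Q h\<bar>)^2
      \<le> (\<Sum>h\<in>histories n. \<bar>sqrt (?P h) - sqrt (?Q h)\<bar>^2) * (\<Sum>h\<in>histories n. (sqrt (?P h) + sqrt (?Q h))^2)"
    unfolding factor by (rule Cauchy_Schwarz_ineq_sum)
  also have "\<dots> \<le> ?K * 4"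
    using hellinger sum_plus K0 by (intro mult_mono) (auto simp: sum_nonneg)
  also have "\<dots> = (2 * sqrt ?K)^2"
    using K0 by (simp add: power_mult_distrib)
  finally show ?thesis
    by (rule power2_le_imp_le) (use K0 in simp)
qed

lemma transcript_kl_nonneg:
  assumes "response_model r0" "response_model r1" "\<And>p b. 0 < r0 p b \<Longrightarrow> 0 < r1 p b"
  shows "0 \<le> transcript_kl r0 r1 price n"
proof -
  have "0 \<le> 2 * sqrt (transcript_kl r0 r1 price n)"
    using transcript_tv_le_sqrt_kl[OF assms, where n=n and price=price]
    by (smt (verit, best) abs_ge_zero sum_nonneg)
  then show ?thesis
    by simp
qed

lemma binary_kl_le_chi_square:
  assumes nonneg: "\<And>b. 0 \<le> r0 p b" and sum0: "r0 p True + r0 p False = 1"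
    and pos: "\<And>b. 0 < r1 p b" and sum1: "r1 p True + r1 p False = 1"
  shows "binary_kl r0 r1 p
    \<le> (r0 p True - r1 p True)^2 / r1 p True + (r0 p False - r1 p False)^2 / r1 p False"
proof -
  have pointwise: "r0 p b * ln (r0 p b / r1 p b) \<le> (r0 p b - r1 p b)^2 / r1 p b + (r0 p b - r1 p b)" for b
  proof (cases "r0 p b = 0")
    case True
    then show ?thesis using pos[of b] by (simp add: power2_eq_square)
  next
    case False
    then have x: "0 < r0 p b" using nonneg[of b] by simp
    have "ln (r0 p b / r1 p b) \<le> r0 p b / r1 p b - 1"
      using x pos[of b] by (intro ln_le_minus_one) auto
    then have "r0 p b * ln (r0 p b / r1 p b) \<le> r0 p b * (r0 p b / r1 p b - 1)"
      using x by (simp add: mult_left_mono)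
    also have "\<dots> = (r0 p b - r1 p b)^2 / r1 p b + (r0 p b - r1 p b)"
      using pos[of b] by (simp add: field_simps power2_eq_square)
    finally show ?thesis .
  qed
  show ?thesis
    unfolding binary_kl_def using pointwise[of True] pointwise[of False] sum0 sum1 by linarith
qed

lemma binary_kl_self: "(\<And>b. r0 p b = r1 p b) \<Longrightarrow> binary_kl r0 r1 p = 0"
  unfolding binary_kl_def by (cases "r1 p True = 0"; cases "r1 p False = 0") auto

section \<open>Testing many hypotheses against one\<close>

definition event_prob ::
    "(real \<Rightarrow> bool \<Rightarrow> real) \<Rightarrow> (bool list \<Rightarrow> real) \<Rightarrow> nat \<Rightarrow> (bool list \<Rightarrow> bool) \<Rightarrow> real" where
  "event_prob r price n S = (\<Sum>h\<in>histories n. transcript_prob r price n h * (if S h then 1 else 0))"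

lemma disjoint_event_prob_le:
  assumes r0: "response_model r0" and r1: "response_model r1"
    and abs_cont: "\<And>p b. 0 < r0 p b \<Longrightarrow> 0 < r1 p b"
    and disjoint: "\<And>h. \<not> (S0 h \<and> S1 h)"
  shows "event_prob r0 price n S0 + event_prob r1 price n S1 \<le> 1 + 2 * sqrt (transcript_kl r0 r1 price n)"
proof -
  let ?P = "transcript_prob r0 price n" and ?Q = "transcript_prob r1 price n"
  have "?P h * (if S0 h then 1 else 0) + ?Q h * (if S1 h then 1 else 0) \<le> ?P h + \<bar>?P h - ?Q h\<bar>" for h
    using disjoint[of h] transcript_prob_nonneg[OF r0, of price n h] transcript_prob_nonneg[OF r1, of price n h]
    by auto
  then have "(\<Sum>h\<in>histories n. ?P h * (if S0 h then 1 else 0)) + (\<Sum>h\<in>histories n. ?Q h * (if S1 h then 1 else 0))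
      \<le> (\<Sum>h\<in>histories n. ?P h) + (\<Sum>h\<in>histories n. \<bar>?P h - ?Q h\<bar>)"
    by (simp add: sum_mono flip: sum.distrib)
  also have "\<dots> \<le> 1 + 2 * sqrt (transcript_kl r0 r1 price n)"
    using transcript_tv_le_sqrt_kl[OF r0 r1 abs_cont] sum_transcript_prob[OF r0] by simp
  finally show ?thesis
    by (simp only: event_prob_def)
qed

lemma sum_sqrt_le_sqrt_card_sum:
  fixes N :: "nat \<Rightarrow> real"
  assumes "\<And>j. j < k \<Longrightarrow> 0 \<le> N j"
  shows "(\<Sum>j<k. sqrt (N j)) \<le> sqrt (real k * (\<Sum>j<k. N j))"
proof -
  have "(\<Sum>j<k. sqrt (N j) * 1)^2 \<le> (\<Sum>j<k. (sqrt (N j))^2) * (\<Sum>j<k. 1^2)"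
    by (rule Cauchy_Schwarz_ineq_sum)
  then show ?thesis
    using assms by (simp add: real_le_rsqrt mult.commute)
qed

lemma sum_expected_query_cost_le:
  assumes r0: "response_model r0" and total: "\<And>p. (\<Sum>j<k. c j p) \<le> C"
  shows "(\<Sum>j<k. \<Sum>h\<in>histories n. transcript_prob r0 price n h * query_cost (c j) price n h)
    \<le> real n * C"
proof -
  let ?P = "transcript_prob r0 price n"
  have "(\<Sum>j<k. \<Sum>h\<in>histories n. ?P h * query_cost (c j) price n h)
      = (\<Sum>h\<in>histories n. \<Sum>j<k. \<Sum>t<n. ?P h * c j (price (take t h)))"
    unfolding query_cost_def sum_distrib_left by (rule sum.swap)
  also have "\<dots> = (\<Sum>h\<in>histories n. ?P h * (\<Sum>t<n. \<Sum>j<k. c j (price (take t h))))"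
    unfolding sum_distrib_left by (intro sum.cong refl sum.swap)
  also have "\<dots> \<le> (\<Sum>h\<in>histories n. ?P h * (real n * C))"
    using sum_mono[of "{..<n}" "\<lambda>t. \<Sum>j<k. c j (price (take t _))" "\<lambda>_. C"] total
    by (intro sum_mono mult_left_mono transcript_prob_nonneg[OF r0]) simp
  also have "\<dots> = real n * C"
    using sum_transcript_prob[OF r0] by (simp flip: sum_distrib_right)
  finally show ?thesis .
qed

lemma many_alternatives_event_prob_le:
  fixes k :: nat and C :: real
  assumes r0: "response_model r0" and r: "\<And>j. j < k \<Longrightarrow> response_model (r j)"
    and abs_cont: "\<And>j p b. j < k \<Longrightarrow> 0 < r0 p b \<Longrightarrow> 0 < r j p b"
    and disjoint: "\<And>j h. j < k \<Longrightarrow> \<not> (S0 h \<and> S j h)"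
    and cost: "\<And>j p. j < k \<Longrightarrow> binary_kl r0 (r j) p \<le> c j p"
    and total: "\<And>p. (\<Sum>j<k. c j p) \<le> C"
  shows "real k * event_prob r0 price n S0 + (\<Sum>j<k. event_prob (r j) price n (S j))
    \<le> real k + 2 * sqrt (real k * (real n * C))"
proof -
  let ?P = "transcript_prob r0 price n"
  define N where "N j = (\<Sum>h\<in>histories n. ?P h * query_cost (c j) price n h)" for j
  have kl_le: "transcript_kl r0 (r j) price n \<le> N j" if "j < k" for j
    unfolding N_def using that by (intro transcript_kl_le_expected_cost r0 abs_cont cost)
  have N0: "0 \<le> N j" if "j < k" for j
    using transcript_kl_nonneg[OF r0 r[OF that] abs_cont[OF that]] kl_le[OF that] by (meson order_trans)
  have "event_prob r0 price n S0 + event_prob (r j) price n (S j) \<le> 1 + 2 * sqrt (N j)"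
    if "j < k" for j
  proof -
    have "event_prob r0 price n S0 + event_prob (r j) price n (S j)
        \<le> 1 + 2 * sqrt (transcript_kl r0 (r j) price n)"
      by (rule disjoint_event_prob_le) (use that r0 r abs_cont disjoint in auto)
    then show ?thesis
      using kl_le[OF that] by (smt (verit) real_sqrt_le_mono)
  qed
  then have "(\<Sum>j<k. event_prob r0 price n S0 + event_prob (r j) price n (S j))
      \<le> (\<Sum>j<k. 1 + 2 * sqrt (N j))"
    by (intro sum_mono) simp
  then have "real k * event_prob r0 price n S0 + (\<Sum>j<k. event_prob (r j) price n (S j))
      \<le> real k + 2 * (\<Sum>j<k. sqrt (N j))"
    by (simp add: sum.distrib sum_distrib_left)
  moreover have "(\<Sum>j<k. sqrt (N j)) \<le> sqrt (real k * (\<Sum>j<k. N j))"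
    using N0 by (rule sum_sqrt_le_sqrt_card_sum)
  moreover have "sqrt (real k * (\<Sum>j<k. N j)) \<le> sqrt (real k * (real n * C))"
    using sum_expected_query_cost_le[OF r0 total, where n=n and price=price]
    by (intro real_sqrt_le_mono mult_left_mono) (simp_all add: N_def)
  ultimately show ?thesis
    by linarith
qed

section \<open>Distribution functions and regular distributions\<close>

definition distribution_function :: "(real \<Rightarrow> real) \<Rightarrow> bool" where
  "distribution_function F \<longleftrightarrow> mono F \<and> (\<forall>x. continuous (at_right x) F) \<and>
     (F \<longlongrightarrow> 0) at_bot \<and> (F \<longlongrightarrow> 1) at_top"

lemma distribution_function_interval_measure:
  assumes "distribution_function F"
  shows "real_distribution (interval_measure F)" "cdf (interval_measure F) = F"
  using assms unfolding distribution_function_def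
  by (auto intro!: real_distribution_interval_measure cdf_interval_measure dest: monoD)

lemma distribution_function_mix:
  assumes F: "distribution_function F" and G: "distribution_function G" and "0 \<le> w" "w \<le> 1"
  shows "distribution_function (\<lambda>x. w * F x + (1 - w) * G x)"
  unfolding distribution_function_def
proof (intro conjI allI monoI)
  show "w * F x + (1 - w) * G x \<le> w * F y + (1 - w) * G y" if "x \<le> y" for x y
    using F G that assms(3,4) unfolding distribution_function_def
    by (intro add_mono mult_left_mono) (auto dest: monoD)
  show "continuous (at_right x) (\<lambda>x. w * F x + (1 - w) * G x)" for x
    using F G unfolding distribution_function_def by (intro continuous_intros) auto
  have "((\<lambda>x. w * F x + (1 - w) * G x) \<longlongrightarrow> w * 0 + (1 - w) * 0) at_bot"
    using F G unfolding distribution_function_def by (intro tendsto_intros) auto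
  then show "((\<lambda>x. w * F x + (1 - w) * G x) \<longlongrightarrow> 0) at_bot"
    by simp
  have "((\<lambda>x. w * F x + (1 - w) * G x) \<longlongrightarrow> w * 1 + (1 - w) * 1) at_top"
    using F G unfolding distribution_function_def by (intro tendsto_intros) auto
  then show "((\<lambda>x. w * F x + (1 - w) * G x) \<longlongrightarrow> 1) at_top"
    by simp
qed

lemma continuous_at_right_if_less:
  fixes g h :: "real \<Rightarrow> real"
  assumes "continuous (at_right x) g" "continuous (at_right x) h"
  shows "continuous (at_right x) (\<lambda>y. if y < m then g y else h y)"
proof (cases "x < m")
  case True
  have "eventually (\<lambda>y. g y = (if y < m then g y else h y)) (at_right x)"
    using True unfolding eventually_at_right_field by (intro exI[of _ m]) auto
  with assms(1) True show ?thesis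
    unfolding continuous_within by (auto elim: Lim_transform_eventually)
next
  case False
  have "eventually (\<lambda>y. h y = (if y < m then g y else h y)) (at_right x)"
    using False unfolding eventually_at_right_field by (intro exI[of _ "x + 1"]) auto
  with assms(2) False show ?thesis
    unfolding continuous_within by (auto elim: Lim_transform_eventually)
qed

lemma distribution_functionI_bounded:
  assumes "mono F" "\<And>x. continuous (at_right x) F"
    and "\<And>x. x < l \<Longrightarrow> F x = 0" "\<And>x. u \<le> x \<Longrightarrow> F x = 1"
  shows "distribution_function F"
proof -
  have "eventually (\<lambda>x. F x = 0) at_bot"
    unfolding eventually_at_bot_linorder using assms(3) by (intro exI[of _ "l - 1"]) auto
  moreover have "eventually (\<lambda>x. F x = 1) at_top"
    unfolding eventually_at_top_linorder using assms(4) by blast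
  ultimately show ?thesis
    using assms(1,2) unfolding distribution_function_def by (auto intro: tendsto_eventually)
qed

lemma concave_on_min:
  fixes f g :: "real \<Rightarrow> real"
  assumes "concave_on S f" "concave_on S g"
  shows "concave_on S (\<lambda>x. min (f x) (g x))"
  unfolding concave_on_iff
proof (intro conjI ballI allI impI)
  show "convex S"
    using assms(1) by (rule concave_on_imp_convex)
  fix x y u v :: real
  assume xy: "x \<in> S" "y \<in> S" and uv: "0 \<le> u" "0 \<le> v" "u + v = 1"
  have "u * f x + v * f y \<le> f (u *\<^sub>R x + v *\<^sub>R y)" "u * g x + v * g y \<le> g (u *\<^sub>R x + v *\<^sub>R y)"
    using assms xy uv unfolding concave_on_iff by blast+
  moreover have "u * min (f x) (g x) \<le> u * f x" "u * min (f x) (g x) \<le> u * g x"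
    "v * min (f y) (g y) \<le> v * f y" "v * min (f y) (g y) \<le> v * g y"
    using uv by (auto intro: mult_left_mono)
  ultimately show "u * min (f x) (g x) + v * min (f y) (g y)
      \<le> min (f (u *\<^sub>R x + v *\<^sub>R y)) (g (u *\<^sub>R x + v *\<^sub>R y))"
    by linarith
qed

lemma concave_on_cong:
  assumes "concave_on S g" "\<And>x. x \<in> S \<Longrightarrow> f x = g x"
  shows "concave_on S f"
  unfolding concave_on_iff
proof (intro conjI ballI allI impI)
  show "convex S"
    using assms(1) by (rule concave_on_imp_convex)
  fix x y and u v :: real
  assume "x \<in> S" "y \<in> S" "0 \<le> u" "0 \<le> v" "u + v = 1"
  moreover from this \<open>convex S\<close> have "u *\<^sub>R x + v *\<^sub>R y \<in> S"
    by (intro convexD)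
  ultimately show "u * f x + v * f y \<le> f (u *\<^sub>R x + v *\<^sub>R y)"
    using assms unfolding concave_on_iff by simp
qed

lemma concave_on_linear_minus_square:
  fixes c :: real
  assumes "0 \<le> c" "convex S"
  shows "concave_on S (\<lambda>q. b * q - c * q^2)"
proof (rule concave_on_diff)
  show "concave_on S (\<lambda>q. b * q)"
    unfolding concave_on_iff using assms(2) by (simp add: algebra_simps)
  show "convex_on S (\<lambda>q. c * q^2)"
    using convex_on_subset[OF convex_power2 subset_UNIV assms(2)] assms(1)
    by (intro convex_on_cmul) auto
qed

lemma regular_interval_measureI:
  assumes "distribution_function F" "\<And>q. q \<in> {0<..<1} \<Longrightarrow> q * quantile F (1 - q) = R q"
    and "concave_on {0<..<1} R"
  shows "regular (interval_measure F)"
  unfolding regular_def distribution_function_interval_measure[OF assms(1)] revenue_curve_def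
  using distribution_function_interval_measure[OF assms(1)] assms(2,3)
  by (auto intro: concave_on_cong)

definition tail_unif_cdf :: "real \<Rightarrow> real \<Rightarrow> real" where
  "tail_unif_cdf a x = (if x < a then 0 else if x < 1 then (x - a) / (1 - a) else 1)"

text \<open>Uniform on [0, a], with the mass of [m, a] moved to an atom at m.\<close>

definition capped_unif_cdf :: "real \<Rightarrow> real \<Rightarrow> real \<Rightarrow> real" where
  "capped_unif_cdf a m x = (if x < 0 then 0 else if x < m then x / a else 1)"

lemma distribution_function_tail_unif_cdf:
  assumes "0 \<le> a" "a < 1"
  shows "distribution_function (tail_unif_cdf a)"
proof (rule distribution_functionI_bounded[where l = a and u = 1])
  show "mono (tail_unif_cdf a)"
    using assms by (auto intro!: monoI simp: tail_unif_cdf_def divide_simps)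
  have "tail_unif_cdf a = (\<lambda>y. if y < a then 0 else (if y < 1 then (y - a) / (1 - a) else 1))"
    by (simp add: tail_unif_cdf_def fun_eq_iff)
  then show "continuous (at_right x) (tail_unif_cdf a)" for x
    using assms by (simp only:)
      (intro continuous_at_right_if_less continuous_at_imp_continuous_at_within[where s = "{x<..}"]
        continuous_intros; simp)
qed (use assms in \<open>auto simp: tail_unif_cdf_def\<close>)

lemma distribution_function_capped_unif_cdf:
  assumes "0 < m" "m < a"
  shows "distribution_function (capped_unif_cdf a m)"
proof (rule distribution_functionI_bounded[where l = 0 and u = m])
  show "mono (capped_unif_cdf a m)"
    using assms by (auto intro!: monoI simp: capped_unif_cdf_def divide_simps)
  have "capped_unif_cdf a m = (\<lambda>y. if y < 0 then 0 else (if y < m then y / a else 1))"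
    by (simp add: capped_unif_cdf_def fun_eq_iff)
  then show "continuous (at_right x) (capped_unif_cdf a m)" for x
    using assms by (simp only:)
      (intro continuous_at_right_if_less continuous_at_imp_continuous_at_within[where s = "{x<..}"]
        continuous_intros; simp)
qed (use assms in \<open>auto simp: capped_unif_cdf_def\<close>)

lemma quantile_eq_Inf_atLeast: "{v. u \<le> F v} = {q..} \<Longrightarrow> quantile F u = q"
  unfolding quantile_def by simp

lemma quantile_tail_unif_cdf:
  assumes "0 \<le> a" "a < 1" "0 < u" "u < 1"
  shows "quantile (tail_unif_cdf a) u = a + (1 - a) * u"
proof -
  define q where "q = a + (1 - a) * u"
  have "0 \<le> (1 - a) * u" "(1 - a) * u \<le> 1 - a"
    using assms by (simp_all add: mult_left_le)
  then have bounds: "a \<le> q" "q \<le> 1"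
    unfolding q_def by linarith+
  have iff: "u \<le> (v - a) / (1 - a) \<longleftrightarrow> q \<le> v" for v
    using assms by (simp add: q_def field_simps)
  have "{v. u \<le> tail_unif_cdf a v} = {q..}"
    using bounds assms by (auto simp: tail_unif_cdf_def iff)
  then show ?thesis
    unfolding q_def by (rule quantile_eq_Inf_atLeast)
qed

lemma quantile_capped_unif_cdf:
  assumes "0 < m" "m < a" "0 < u" "u < 1"
  shows "quantile (capped_unif_cdf a m) u = min (a * u) m"
proof (rule quantile_eq_Inf_atLeast, intro set_eqI)
  fix v
  have "u \<le> v / a \<longleftrightarrow> a * u \<le> v"
    using assms by (simp add: field_simps)
  moreover have "v / a < 0" if "v < 0"
    using assms that by (simp add: divide_neg_pos)
  ultimately show "v \<in> {v. u \<le> capped_unif_cdf a m v} \<longleftrightarrow> v \<in> {min (a * u) m..}"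
    using assms by (auto simp: capped_unif_cdf_def)
qed

lemma regular_tail_unif:
  assumes "0 \<le> a" "a < 1"
  shows "regular (interval_measure (tail_unif_cdf a))"
proof (rule regular_interval_measureI)
  show "distribution_function (tail_unif_cdf a)"
    using assms by (rule distribution_function_tail_unif_cdf)
  show "q * quantile (tail_unif_cdf a) (1 - q) = 1 * q - (1 - a) * q^2" if "q \<in> {0<..<1}" for q
    using that assms by (simp add: quantile_tail_unif_cdf power2_eq_square algebra_simps)
  show "concave_on {0<..<1} (\<lambda>q. 1 * q - (1 - a) * q^2)"
    using assms by (intro concave_on_linear_minus_square) auto
qed

lemma regular_capped_unif:
  assumes "0 < m" "m < a"
  shows "regular (interval_measure (capped_unif_cdf a m))"
proof (rule regular_interval_measureI)
  show "distribution_function (capped_unif_cdf a m)"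
    using assms by (rule distribution_function_capped_unif_cdf)
  show "q * quantile (capped_unif_cdf a m) (1 - q) = min (a * q - a * q^2) (m * q - 0 * q^2)"
    if "q \<in> {0<..<1}" for q
    using that assms by (simp add: quantile_capped_unif_cdf min_mult_distrib_left power2_eq_square algebra_simps)
  show "concave_on {0<..<1} (\<lambda>q. min (a * q - a * q^2) (m * q - 0 * q^2))"
    using assms by (intro concave_on_min concave_on_linear_minus_square) auto
qed

section \<open>The hard instances\<close>

text \<open>The uniform distribution on [0, 1] with the mass of [m, a) moved to an atom at m;
  as a mixture of two regular distributions it lies in the class.\<close>

definition collapsed_cdf :: "real \<Rightarrow> real \<Rightarrow> real \<Rightarrow> real" where
  "collapsed_cdf a m x = a * capped_unif_cdf a m x + (1 - a) * tail_unif_cdf a x"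

definition unif_measure :: "real measure" where
  "unif_measure = interval_measure (tail_unif_cdf 0)"

definition collapsed_measure :: "real \<Rightarrow> real \<Rightarrow> real measure" where
  "collapsed_measure a m = interval_measure (collapsed_cdf a m)"

lemma tail_unif_cdf_0: "tail_unif_cdf 0 x = max 0 (min 1 x)"
  by (simp add: tail_unif_cdf_def)

lemma collapsed_cdf_eq:
  assumes "0 < m" "m < a" "a < 1"
  shows "collapsed_cdf a m x = (if m \<le> x \<and> x < a then a else tail_unif_cdf 0 x)"
  using assms by (auto simp: collapsed_cdf_def capped_unif_cdf_def tail_unif_cdf_def field_simps)

lemma distribution_function_collapsed_cdf:
  assumes "0 < m" "m < a" "a < 1"
  shows "distribution_function (collapsed_cdf a m)"
  unfolding collapsed_cdf_def[abs_def] using assms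
  by (intro distribution_function_mix distribution_function_capped_unif_cdf
      distribution_function_tail_unif_cdf) auto

lemma unif_measure: "real_distribution unif_measure" "cdf unif_measure = tail_unif_cdf 0"
  unfolding unif_measure_def
  by (intro distribution_function_interval_measure distribution_function_tail_unif_cdf; simp)+

lemma collapsed_measure:
  assumes "0 < m" "m < a" "a < 1"
  shows "real_distribution (collapsed_measure a m)" "cdf (collapsed_measure a m) = collapsed_cdf a m"
  unfolding collapsed_measure_def using distribution_function_collapsed_cdf[OF assms]
  by (rule distribution_function_interval_measure)+

lemma measure_lessThan_eq_left_limit:
  assumes "real_distribution D" "(cdf D \<longlongrightarrow> L) (at_left p)"
  shows "measure D {..<p} = L"
proof -
  interpret real_distribution D by fact
  show ?thesis
    using tendsto_unique[OF trivial_limit_at_left_real cdf_at_left assms(2)] .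
qed

lemma measure_Icc_0_1_eq_1:
  assumes D: "real_distribution D" and "\<And>x. x < 0 \<Longrightarrow> cdf D x = 0" "cdf D 1 = 1"
  shows "measure D {0..1} = 1"
proof -
  interpret real_distribution D by fact
  have "eventually (\<lambda>x. cdf D x = 0) (at_left 0)"
    unfolding eventually_at_left_field using assms(2) by (intro exI[of _ "-1"]) auto
  then have "(cdf D \<longlongrightarrow> 0) (at_left 0)"
    by (rule tendsto_eventually)
  then have "measure D {..<0} = 0"
    by (rule measure_lessThan_eq_left_limit[OF D])
  moreover have "measure D ({..1} - {..<0}) = measure D {..1} - measure D {..<0}"
    by (rule finite_measure_Diff) auto
  moreover have "{0..1} = {..1} - {..<(0::real)}"
    by auto
  ultimately show ?thesis
    using assms(3) by (simp add: cdf_def)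
qed

lemma mix2_regular_class_interval_measure:
  assumes F1: "distribution_function F1" "regular (interval_measure F1)"
    and F2: "distribution_function F2" "regular (interval_measure F2)"
    and w: "0 \<le> w" "w \<le> 1"
    and support: "\<And>x. x < 0 \<Longrightarrow> w * F1 x + (1 - w) * F2 x = 0" "w * F1 1 + (1 - w) * F2 1 = 1"
  shows "mix2_regular_class (interval_measure (\<lambda>x. w * F1 x + (1 - w) * F2 x))"
proof -
  let ?F = "\<lambda>x. w * F1 x + (1 - w) * F2 x"
  have F: "distribution_function ?F"
    using F1 F2 w by (intro distribution_function_mix)
  note D = distribution_function_interval_measure[OF F]
  have "measure (interval_measure ?F) {0..1} = 1"
    using support by (intro measure_Icc_0_1_eq_1 D(1)) (simp_all add: D(2))
  moreover have "\<forall>x. cdf (interval_measure ?F) x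
      = w * cdf (interval_measure F1) x + (1 - w) * cdf (interval_measure F2) x"
    using F1 F2 by (simp add: D(2) distribution_function_interval_measure)
  ultimately show ?thesis
    unfolding mix2_regular_class_def using D(1) F1 F2 w by blast
qed

lemma mix2_regular_class_unif: "mix2_regular_class unif_measure"
proof -
  have "mix2_regular_class
      (interval_measure (\<lambda>x. 1 * tail_unif_cdf 0 x + (1 - 1) * tail_unif_cdf 0 x))"
    by (intro mix2_regular_class_interval_measure distribution_function_tail_unif_cdf regular_tail_unif)
      (auto simp: tail_unif_cdf_def)
  then show ?thesis
    by (simp add: unif_measure_def)
qed

lemma mix2_regular_class_collapsed:
  assumes "0 < m" "m < a" "a < 1"
  shows "mix2_regular_class (collapsed_measure a m)"
  unfolding collapsed_measure_def collapsed_cdf_def[abs_def] using assms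
  by (intro mix2_regular_class_interval_measure distribution_function_capped_unif_cdf
      distribution_function_tail_unif_cdf regular_capped_unif regular_tail_unif)
    (auto simp: capped_unif_cdf_def tail_unif_cdf_def)

lemma tail_unif_cdf_0_at_left: "(tail_unif_cdf 0 \<longlongrightarrow> tail_unif_cdf 0 p) (at_left p)"
proof -
  have "continuous (at_left p) (\<lambda>x. max 0 (min 1 x) :: real)"
    by (intro continuous_at_imp_continuous_at_within[where s = "{..<p}"] continuous_intros)
  then show ?thesis
    unfolding continuous_within tail_unif_cdf_0[abs_def] by simp
qed

lemma measure_unif_lessThan: "measure unif_measure {..<p} = tail_unif_cdf 0 p"
  using unif_measure tail_unif_cdf_0_at_left by (intro measure_lessThan_eq_left_limit) simp_all

lemma measure_collapsed_lessThan:
  assumes "0 < m" "m < a" "a < 1"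
  shows "measure (collapsed_measure a m) {..<p} = (if m < p \<and> p \<le> a then a else tail_unif_cdf 0 p)"
proof (rule measure_lessThan_eq_left_limit[OF collapsed_measure(1)[OF assms]])
  show "(cdf (collapsed_measure a m) \<longlongrightarrow> (if m < p \<and> p \<le> a then a else tail_unif_cdf 0 p))
      (at_left p)"
  proof (cases "m < p \<and> p \<le> a")
    case True
    have "eventually (\<lambda>x. collapsed_cdf a m x = a) (at_left p)"
      unfolding eventually_at_left_field using True assms
      by (intro exI[of _ m]) (auto simp: collapsed_cdf_eq)
    then show ?thesis
      using True by (simp add: collapsed_measure(2)[OF assms] tendsto_eventually)
  next
    case False
    have "eventually (\<lambda>x. tail_unif_cdf 0 x = collapsed_cdf a m x) (at_left p)"
      unfolding eventually_at_left_field using False assms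
      by (intro exI[of _ "if p \<le> m then p - 1 else a"]) (auto simp: collapsed_cdf_eq)
    with tail_unif_cdf_0_at_left[of p] have "(collapsed_cdf a m \<longlongrightarrow> tail_unif_cdf 0 p) (at_left p)"
      by (rule Lim_transform_eventually)
    then show ?thesis
      using False by (subst if_not_P) (simp_all add: collapsed_measure(2)[OF assms])
  qed
qed

lemma resp_prob_eq:
  assumes "real_distribution D"
  shows "resp_prob D p b = (if b then 1 - measure D {..<p} else measure D {..<p})"
proof -
  interpret real_distribution D by fact
  have "measure D {p..} = 1 - measure D {..<p}"
    using prob_compl[of "{..<p}"] by (simp add: Compl_eq_Diff_UNIV[symmetric] Compl_lessThan)
  then show ?thesis
    unfolding resp_prob_def by simp
qed

lemma response_model_resp_prob:
  assumes "real_distribution D"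
  shows "response_model (resp_prob D)"
proof -
  interpret real_distribution D by fact
  show ?thesis
    unfolding response_model_def by (simp add: resp_prob_eq[OF assms])
qed

lemma resp_prob_unif: "resp_prob unif_measure p b = (if b then 1 - tail_unif_cdf 0 p else tail_unif_cdf 0 p)"
  by (simp add: resp_prob_eq[OF unif_measure(1)] measure_unif_lessThan)

lemma resp_prob_collapsed:
  assumes "0 < m" "m < a" "a < 1"
  shows "resp_prob (collapsed_measure a m) p b
    = (if m < p \<and> p \<le> a then (if b then 1 - a else a) else resp_prob unif_measure p b)"
  by (simp add: resp_prob_eq[OF collapsed_measure(1)[OF assms]] measure_collapsed_lessThan[OF assms]
      resp_prob_unif)

lemma resp_prob_collapsed_pos:
  assumes "0 < m" "m < a" "a < 1" "0 < resp_prob unif_measure p b"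
  shows "0 < resp_prob (collapsed_measure a m) p b"
  using assms by (simp add: resp_prob_collapsed)

lemma binary_kl_unif_collapsed_le:
  assumes "1/4 \<le> m" "m < a" "a \<le> 3/4"
  shows "binary_kl (resp_prob unif_measure) (resp_prob (collapsed_measure a m)) p
    \<le> (if m < p \<and> p \<le> a then 8 * (a - m)^2 else 0)"
proof -
  have params: "0 < m" "m < a" "a < 1"
    using assms by auto
  show ?thesis
  proof (cases "m < p \<and> p \<le> a")
    case True
    then have "tail_unif_cdf 0 p = p"
      using assms by (simp add: tail_unif_cdf_0)
    then have r0: "resp_prob unif_measure p b = (if b then 1 - p else p)"
      and r1: "resp_prob (collapsed_measure a m) p b = (if b then 1 - a else a)" for b
      using True by (simp_all add: resp_prob_unif resp_prob_collapsed[OF params])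
    have "binary_kl (resp_prob unif_measure) (resp_prob (collapsed_measure a m)) p
        \<le> (p - a)^2 / (1 - a) + (a - p)^2 / a"
      using binary_kl_le_chi_square[of "resp_prob unif_measure" p "resp_prob (collapsed_measure a m)"]
        params True unfolding r0 r1 by (simp add: power2_commute)
    also have "\<dots> \<le> (a - m)^2 / (1/4) + (a - m)^2 / (1/4)"
    proof -
      have "(p - a)^2 \<le> (a - m)^2" "(a - p)^2 \<le> (a - m)^2"
        using True by (simp_all add: abs_le_square_iff[symmetric] abs_if)
      then show ?thesis
        using assms by (intro add_mono frac_le) auto
    qed
    finally show ?thesis
      using True by simp
  next
    case False
    have "binary_kl (resp_prob unif_measure) (resp_prob (collapsed_measure a m)) p = 0"
      by (rule binary_kl_self) (use False in \<open>auto simp: resp_prob_collapsed[OF params]\<close>)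
    then show ?thesis
      using False by simp
  qed
qed

section \<open>Levy separation\<close>

lemma levy_dist_le_obtain:
  assumes "levy_dist F G \<le> ereal \<epsilon>" "0 < \<eta>"
  obtains e where "e < \<epsilon> + \<eta>" "\<And>v. F (v - e) - e \<le> G v" "\<And>v. G v \<le> F (v + e) + e"
proof -
  have "levy_dist F G < ereal (\<epsilon> + \<eta>)"
    using assms by (simp add: le_less_trans)
  then show ?thesis
    using that unfolding levy_dist_def Inf_less_iff by auto
qed

text \<open>The jump of height a - m at m rules out a common Levy-\<epsilon> estimate.\<close>

lemma not_levy_close_unif_and_collapsed:
  assumes "0 < \<epsilon>" "0 < m" "m < a" "a < 1" "5 * \<epsilon> \<le> a - m"
  shows "\<not> (levy_dist (tail_unif_cdf 0) G \<le> ereal \<epsilon> \<and> levy_dist (collapsed_cdf a m) G \<le> ereal \<epsilon>)"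
proof
  assume "levy_dist (tail_unif_cdf 0) G \<le> ereal \<epsilon> \<and> levy_dist (collapsed_cdf a m) G \<le> ereal \<epsilon>"
  then obtain e1 e2 where e1: "e1 < \<epsilon> + \<epsilon>/8" "\<And>v. G v \<le> tail_unif_cdf 0 (v + e1) + e1"
    and e2: "e2 < \<epsilon> + \<epsilon>/8" "\<And>v. collapsed_cdf a m (v - e2) - e2 \<le> G v"
    using levy_dist_le_obtain[of _ G \<epsilon> "\<epsilon>/8"] assms(1) by (metis zero_less_divide_iff zero_less_numeral)
  have "a - e2 \<le> G (m + e2)"
    using e2(2)[of "m + e2"] assms by (simp add: collapsed_cdf_eq)
  also have "\<dots> \<le> max 0 (m + e2 + e1) + e1"
    using e1(2)[of "m + e2"] by (simp add: tail_unif_cdf_0)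
  finally show False
    using assms e1(1) e2(1) by (auto simp: max_def split: if_splits)
qed

definition hard_instance :: "real \<Rightarrow> nat \<Rightarrow> real measure" where
  "hard_instance \<epsilon> j = collapsed_measure (1/4 + (real j + 1) * (5 * \<epsilon>)) (1/4 + real j * (5 * \<epsilon>))"

lemma sum_if_in_disjoint_intervals_le:
  fixes lo hi :: "nat \<Rightarrow> real" and C :: real
  assumes disjoint: "\<And>i j. i < j \<Longrightarrow> hi i \<le> lo j" and "0 \<le> C"
  shows "(\<Sum>j<k. if lo j < p \<and> p \<le> hi j then C else 0) \<le> C"
proof -
  let ?A = "{..<k} \<inter> {j. lo j < p \<and> p \<le> hi j}"
  have "i = j" if "i \<in> ?A" "j \<in> ?A" for i j
  proof (rule ccontr)
    assume "i \<noteq> j"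
    then have "hi i \<le> lo j \<or> hi j \<le> lo i"
      using disjoint by (meson linorder_neqE_nat)
    then show False
      using that by auto
  qed
  then have "card ?A \<le> Suc 0"
    by (subst card_le_Suc0_iff_eq) auto
  moreover have "(\<Sum>j<k. if lo j < p \<and> p \<le> hi j then C else 0) = C * real (card ?A)"
    by (simp add: sum.If_cases)
  ultimately show ?thesis
    using \<open>0 \<le> C\<close> mult_left_le[of "real (card ?A)" C] by simp
qed

lemma det_success_eq_event_prob:
  "det_success D n \<epsilon> price est
    = event_prob (resp_prob D) price n (\<lambda>h. levy_dist (cdf D) (est h) \<le> ereal \<epsilon>)"
  unfolding det_success_def event_prob_def transcript_prob_def ..

lemma hard_family_det_success_le:
  assumes "0 < \<epsilon>" "real k * (5 * \<epsilon>) \<le> 1/2"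
  shows "real k * det_success unif_measure n \<epsilon> price est
      + (\<Sum>j<k. det_success (hard_instance \<epsilon> j) n \<epsilon> price est)
    \<le> real k + 2 * sqrt (real k * (real n * (200 * \<epsilon>^2)))"
proof -
  define lo where "lo j = 1/4 + real j * (5 * \<epsilon>)" for j
  define hi where "hi j = 1/4 + (real j + 1) * (5 * \<epsilon>)" for j
  have range: "1/4 \<le> lo j" "lo j < hi j" "hi j \<le> 3/4" "hi j - lo j = 5 * \<epsilon>" if "j < k" for j
  proof -
    have "(real j + 1) * (5 * \<epsilon>) \<le> real k * (5 * \<epsilon>)"
      using that assms by (intro mult_right_mono) auto
    then show "1/4 \<le> lo j" "lo j < hi j" "hi j \<le> 3/4" "hi j - lo j = 5 * \<epsilon>"
      using assms by (auto simp: lo_def hi_def algebra_simps)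
  qed
  then have params: "0 < lo j" "lo j < hi j" "hi j < 1" if "j < k" for j
    using that by fastforce+
  have hard_instance_eq: "hard_instance \<epsilon> j = collapsed_measure (hi j) (lo j)" for j
    by (simp add: hard_instance_def lo_def hi_def)
  let ?c = "\<lambda>j p. if lo j < p \<and> p \<le> hi j then 200 * \<epsilon>^2 else 0"
  have "real k * event_prob (resp_prob unif_measure) price n
        (\<lambda>h. levy_dist (tail_unif_cdf 0) (est h) \<le> ereal \<epsilon>)
      + (\<Sum>j<k. event_prob (resp_prob (collapsed_measure (hi j) (lo j))) price n
        (\<lambda>h. levy_dist (collapsed_cdf (hi j) (lo j)) (est h) \<le> ereal \<epsilon>))
    \<le> real k + 2 * sqrt (real k * (real n * (200 * \<epsilon>^2)))"
  proof (rule many_alternatives_event_prob_le[where c = ?c])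
    show "response_model (resp_prob unif_measure)"
      by (rule response_model_resp_prob[OF unif_measure(1)])
    show "response_model (resp_prob (collapsed_measure (hi j) (lo j)))" if "j < k" for j
      using params[OF that] by (intro response_model_resp_prob collapsed_measure(1))
    show "0 < resp_prob (collapsed_measure (hi j) (lo j)) p b"
      if "j < k" "0 < resp_prob unif_measure p b" for j p b
      using params[OF that(1)] that(2) by (rule resp_prob_collapsed_pos)
    show "\<not> (levy_dist (tail_unif_cdf 0) (est h) \<le> ereal \<epsilon>
        \<and> levy_dist (collapsed_cdf (hi j) (lo j)) (est h) \<le> ereal \<epsilon>)" if "j < k" for j h
      using params[OF that] range(4)[OF that] assms(1) by (intro not_levy_close_unif_and_collapsed) auto
    show "binary_kl (resp_prob unif_measure) (resp_prob (collapsed_measure (hi j) (lo j))) p \<le> ?c j p"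
      if "j < k" for j p
    proof -
      have cost: "8 * (hi j - lo j)^2 = 200 * \<epsilon>^2"
        using range(4)[OF that] by (simp add: power_mult_distrib)
      show ?thesis
        using binary_kl_unif_collapsed_le[of "lo j" "hi j" p, unfolded cost] range[OF that] by simp
    qed
    show "(\<Sum>j<k. ?c j p) \<le> 200 * \<epsilon>^2" for p
      by (rule sum_if_in_disjoint_intervals_le) (auto simp: lo_def hi_def assms(1))
  qed
  then show ?thesis
    by (simp add: det_success_eq_event_prob hard_instance_eq unif_measure(2) collapsed_measure(2)[OF params])
qed

lemma success_prob_average_le:
  assumes "prob_space M"
    and "2/3 \<le> success_prob M D0 n \<epsilon> price est"
    and "\<And>j. j < k \<Longrightarrow> 2/3 \<le> success_prob M (D j) n \<epsilon> price est"
    and "\<And>\<omega>. real k * det_success D0 n \<epsilon> (price \<omega>) (est \<omega>)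
        + (\<Sum>j<k. det_success (D j) n \<epsilon> (price \<omega>) (est \<omega>)) \<le> B"
  shows "real k * (4/3) \<le> B"
proof -
  interpret prob_space M by fact
  let ?null = "\<lambda>\<omega>. det_success D0 n \<epsilon> (price \<omega>) (est \<omega>)"
  let ?alt = "\<lambda>j \<omega>. det_success (D j) n \<epsilon> (price \<omega>) (est \<omega>)"
  have int0: "integrable M ?null"
    \<comment> \<open>a non-integrable function has Bochner integral 0\<close>
    using assms(2) not_integrable_integral_eq unfolding success_prob_def by force
  have int: "integrable M (?alt j)" if "j < k" for j
    using assms(3)[OF that] not_integrable_integral_eq unfolding success_prob_def by force
  have "real k * (2/3) \<le> real k * integral\<^sup>L M ?null"
    using assms(2) unfolding success_prob_def by (intro mult_left_mono) auto
  moreover have "real k * (2/3) \<le> (\<Sum>j<k. integral\<^sup>L M (?alt j))"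
    using assms(3) sum_mono[of "{..<k}" "\<lambda>_. 2/3" "\<lambda>j. integral\<^sup>L M (?alt j)"]
    unfolding success_prob_def by simp
  ultimately have "real k * (4/3) \<le> real k * integral\<^sup>L M ?null + (\<Sum>j<k. integral\<^sup>L M (?alt j))"
    by linarith
  also have "\<dots> = (\<integral>\<omega>. real k * ?null \<omega> \<partial>M) + (\<integral>\<omega>. (\<Sum>j<k. ?alt j \<omega>) \<partial>M)"
    using int by (simp add: Bochner_Integration.integral_sum)
  also have "\<dots> = (\<integral>\<omega>. real k * ?null \<omega> + (\<Sum>j<k. ?alt j \<omega>) \<partial>M)"
    using int0 int by (intro Bochner_Integration.integral_add[symmetric])
      (auto intro!: Bochner_Integration.integrable_sum)
  also have "\<dots> \<le> B"
    using int0 int assms(4)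
    by (intro integral_le_const AE_I2) (auto intro!: Bochner_Integration.integrable_sum)
  finally show ?thesis .
qed

lemma le_of_le_plus_sqrt:
  fixes k C :: real
  assumes "0 < k" "k * (4/3) \<le> k + 2 * sqrt (k * C)"
  shows "k \<le> 36 * C"
proof -
  have bound: "k / 3 \<le> 2 * sqrt (k * C)"
    using assms(2) by simp
  then have "0 \<le> sqrt (k * C)"
    using assms(1) by linarith
  then have kC: "0 \<le> k * C"
    by simp
  have "(k / 3)^2 \<le> (2 * sqrt (k * C))^2"
    using bound assms(1) by (intro power_mono) auto
  also have "\<dots> = 4 * (k * C)"
    using kC by (simp add: power_mult_distrib)
  finally have "k * (k / 9) \<le> k * (36 * C / 9)"
    by (simp add: power2_eq_square)
  then show ?thesis
    using assms(1) by simp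
qed

lemma mix2_regular_class_hard_instance:
  assumes "0 < \<epsilon>" "j < k" "real k * (5 * \<epsilon>) \<le> 1/2"
  shows "mix2_regular_class (hard_instance \<epsilon> j)"
proof -
  have "(real j + 1) * (5 * \<epsilon>) \<le> real k * (5 * \<epsilon>)" "0 \<le> real j * (5 * \<epsilon>)"
    using assms by (auto intro: mult_right_mono)
  then have "0 < 1/4 + real j * (5 * \<epsilon>)" "1/4 + (real j + 1) * (5 * \<epsilon>) < 1"
    using assms(3) by linarith+
  then show ?thesis
    unfolding hard_instance_def using assms(1)
    by (intro mix2_regular_class_collapsed) (auto simp: algebra_simps)
qed

theorem theorem4:
  shows "\<exists>c>0. \<exists>\<epsilon>0>0. \<forall>\<epsilon>. 0 < \<epsilon> \<and> \<epsilon> < \<epsilon>0 \<longrightarrow>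
    (\<forall>(M::real measure) (n::nat) price est.
       prob_space M \<and> (\<forall>D. mix2_regular_class D \<longrightarrow> success_prob M D n \<epsilon> price est \<ge> 2/3)
       \<longrightarrow> real n \<ge> c / \<epsilon> ^ 3)"
proof (rule exI[of _ "1/144000"], intro conjI, simp, rule exI[of _ "1/40"], intro conjI, simp,
    intro allI impI, elim conjE)
  fix \<epsilon> :: real and M :: "real measure" and n :: nat and price est
  assume \<epsilon>: "0 < \<epsilon>" "\<epsilon> < 1/40" and M: "prob_space M"
    and success: "\<forall>D. mix2_regular_class D \<longrightarrow> 2/3 \<le> success_prob M D n \<epsilon> price est"
  define k where "k = nat \<lfloor>1 / (10 * \<epsilon>)\<rfloor>"
  have "4 < 1 / (10 * \<epsilon>)"
    using \<epsilon> by (simp add: field_simps)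
  then have "1 / (20 * \<epsilon>) \<le> real k" "real k \<le> 1 / (10 * \<epsilon>)"
    unfolding k_def by linarith+
  then have k: "1 \<le> 20 * \<epsilon> * real k" "real k * (5 * \<epsilon>) \<le> 1/2"
    using \<epsilon> by (simp_all add: field_simps)
  then have k_pos: "0 < real k"
    by (cases "k = 0") auto
  have "real k * (4/3) \<le> real k + 2 * sqrt (real k * (real n * (200 * \<epsilon>^2)))"
  proof (rule success_prob_average_le[OF M])
    show "2/3 \<le> success_prob M unif_measure n \<epsilon> price est"
      using success mix2_regular_class_unif by blast
    show "2/3 \<le> success_prob M (hard_instance \<epsilon> j) n \<epsilon> price est" if "j < k" for j
      using success mix2_regular_class_hard_instance[OF \<epsilon>(1) that k(2)] by blast
  qed (rule hard_family_det_success_le[OF \<epsilon>(1) k(2)])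
  then have "real k \<le> 36 * (real n * (200 * \<epsilon>^2))"
    by (rule le_of_le_plus_sqrt[OF k_pos])
  then have "real k \<le> 7200 * \<epsilon>^2 * real n"
    by (simp add: mult.commute mult.left_commute)
  then have "1 \<le> 20 * \<epsilon> * (7200 * \<epsilon>^2 * real n)"
    using k(1) \<epsilon>(1) by (smt (verit) mult_left_mono)
  then show "1 / 144000 / \<epsilon>^3 \<le> real n"
    using \<epsilon>(1) by (simp add: field_simps power3_eq_cube power2_eq_square)
qed

end
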